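(* Let $N\ge 1$ and $k\ge 1$ be integers, let $\beta>0$, and let $\psi_1,\dots,\psi_N\in\mathbb{R}$ be contribution estimates of nodes $i\in[N]$ (the quantities $\beta,\psi_i$ may depend on an accuracy parameter $\epsilon>0$). Define $\varrho_i=\exp(\psi_i/\beta)/\sum_{i'\in[N]}\exp(\psi_{i'}/\beta)$, $q_i=1-(1-\varrho_i)^k$, $\Gamma_i=\sum_{\gamma=0}^{\infty}\gamma\,(1-q_i)^{\gamma}=(1-q_i)/q_i^2$, and $C_i=c(\epsilon)+\Gamma_i$, where $c(\epsilon)=\mathcal{O}(1/\epsilon)$ is common to all nodes. Let $i_*\in\arg\min_{i\in[N]}\psi_i$. If $\Gamma_{i_*}=\mathcal{O}(1/\epsilon)$, then $C_i=\mathcal{O}(1/\epsilon)$ for all $i\in[N]$.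
   Context: Setting: federated learning with $N$ nodes; after a contribution-evaluation phase, each node $i$ has a contribution estimate $\psi_i$. In each subsequent iteration $k$ nodes are sampled with replacement according to $(\varrho_i)$ and synchronize with the latest global model. $\Gamma_i$ is node $i$'s expected staleness (iterations since last synchronization), $c(\epsilon)$ is the expected number of iterations for the global model to reach $\epsilon$-accuracy (of order $\mathcal{O}(1/\epsilon)$ as $\epsilon\to 0$), and $C_i=c(\epsilon)+\Gamma_i$ is node $i$'s expected convergence complexity. Asymptotic notation is as $\epsilon\to 0$. *)

theory Defs
  imports "HOL-Analysis.Analysis" "HOL-Library.Landau_Symbols"
begin

definition rho :: "nat \<Rightarrow> real \<Rightarrow> (nat \<Rightarrow> real) \<Rightarrow> nat \<Rightarrow> real" where
  "rho N beta psi i = exp (psi i / beta) / (\<Sum>j\<in>{1..N}. exp (psi j / beta))"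

text \<open>Probability that node i is sampled at least once among k draws with replacement.\<close>
definition qprob :: "nat \<Rightarrow> nat \<Rightarrow> real \<Rightarrow> (nat \<Rightarrow> real) \<Rightarrow> nat \<Rightarrow> real" where
  "qprob N k beta psi i = 1 - (1 - rho N beta psi i) ^ k"

definition Gamma :: "nat \<Rightarrow> nat \<Rightarrow> real \<Rightarrow> (nat \<Rightarrow> real) \<Rightarrow> nat \<Rightarrow> real" where
  "Gamma N k beta psi i = (\<Sum>\<gamma>. real \<gamma> * (1 - qprob N k beta psi i) ^ \<gamma>)"

definition Cplx :: "real \<Rightarrow> nat \<Rightarrow> nat \<Rightarrow> real \<Rightarrow> (nat \<Rightarrow> real) \<Rightarrow> nat \<Rightarrow> real" where
  "Cplx c N k beta psi i = c + Gamma N k beta psi i"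

end

theory Submission
  imports Defs
begin

(* The softmax weight rho_i is increasing in psi_i, so the least contributing node i_* is the
   least likely to be sampled; and Gamma_i = sum of gamma x^gamma with x = (1 - rho_i)^k is
   increasing in x. Hence Gamma_i <= Gamma_{i_*} = O(1/eps) for every node, and adding the
   common c = O(1/eps) keeps C_i in O(1/eps). *)

lemma summable_real_mult_power:
  fixes x :: real
  assumes "0 \<le> x" "x < 1"
  shows "summable (\<lambda>n. real n * x ^ n)"
proof -
  have "summable (\<lambda>n. of_nat (Suc n) * x ^ n)"
    using geometric_deriv_sums[of x] assms by (auto simp: sums_iff)
  then show ?thesis
    by (rule summable_comparison_test[rotated])
       (auto intro!: exI[of _ 0] mult_right_mono simp: assms)
qed

lemma suminf_real_mult_power_nonneg:
  fixes x :: real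
  assumes "0 \<le> x" "x < 1"
  shows "0 \<le> (\<Sum>n. real n * x ^ n)"
  using assms by (intro suminf_nonneg summable_real_mult_power) auto

lemma suminf_real_mult_power_mono:
  fixes x y :: real
  assumes "0 \<le> x" "x \<le> y" "y < 1"
  shows "(\<Sum>n. real n * x ^ n) \<le> (\<Sum>n. real n * y ^ n)"
  using assms by (intro suminf_le) (auto intro!: mult_left_mono power_mono summable_real_mult_power)

lemma rho_pos:
  assumes "N \<ge> 1"
  shows "0 < rho N b psi i"
proof -
  have "0 < (\<Sum>j\<in>{1..N}. exp (psi j / b))"
    using assms by (intro sum_pos) auto
  then show ?thesis
    unfolding rho_def by simp
qed

lemma rho_le_one:
  assumes "i \<in> {1..N}"
  shows "rho N b psi i \<le> 1"
proof -
  have "exp (psi i / b) \<le> (\<Sum>j\<in>{1..N}. exp (psi j / b))"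
    using assms by (intro member_le_sum) auto
  moreover have "0 < (\<Sum>j\<in>{1..N}. exp (psi j / b))"
    using assms by (intro sum_pos) auto
  ultimately show ?thesis
    unfolding rho_def by simp
qed

lemma rho_mono:
  assumes "b > 0" "psi j \<le> psi i"
  shows "rho N b psi j \<le> rho N b psi i"
proof -
  have "exp (psi j / b) \<le> exp (psi i / b)"
    using assms by (simp add: divide_right_mono)
  then show ?thesis
    unfolding rho_def by (simp add: divide_right_mono sum_nonneg)
qed

lemma Gamma_eq_suminf:
  "Gamma N k b psi i = (\<Sum>n. real n * ((1 - rho N b psi i) ^ k) ^ n)"
  unfolding Gamma_def qprob_def by simp

lemma staleness_factor_less_one:
  assumes "i \<in> {1..N}" "k \<ge> 1"
  shows "(1 - rho N b psi i) ^ k < 1"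
proof -
  have "0 < rho N b psi i" "rho N b psi i \<le> 1"
    using assms(1) by (auto intro: rho_pos rho_le_one)
  then show ?thesis
    using assms(2) by (simp add: power_less_one_iff)
qed

lemma Gamma_nonneg:
  assumes "i \<in> {1..N}" "k \<ge> 1"
  shows "0 \<le> Gamma N k b psi i"
  unfolding Gamma_eq_suminf
  using rho_le_one[OF assms(1)] staleness_factor_less_one[OF assms]
  by (intro suminf_real_mult_power_nonneg) auto

lemma Gamma_antimono:
  assumes "b > 0" "i \<in> {1..N}" "j \<in> {1..N}" "k \<ge> 1" "psi j \<le> psi i"
  shows "Gamma N k b psi i \<le> Gamma N k b psi j"
  unfolding Gamma_eq_suminf
proof (rule suminf_real_mult_power_mono)
  have "rho N b psi j \<le> rho N b psi i" "rho N b psi i \<le> 1"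
    using assms by (auto intro: rho_mono rho_le_one)
  then show "0 \<le> (1 - rho N b psi i) ^ k"
    and "(1 - rho N b psi i) ^ k \<le> (1 - rho N b psi j) ^ k"
    by (auto intro: power_mono)
  show "(1 - rho N b psi j) ^ k < 1"
    using assms by (intro staleness_factor_less_one) auto
qed

theorem proposition3:
  fixes N k :: nat
    and beta c :: "real \<Rightarrow> real"
    and psi :: "real \<Rightarrow> nat \<Rightarrow> real"
    and istar :: "real \<Rightarrow> nat"
  assumes "N \<ge> 1" and "k \<ge> 1"
    and "\<forall>\<epsilon>>0. beta \<epsilon> > 0"
    and "c \<in> O[at_right 0](\<lambda>\<epsilon>. 1 / \<epsilon>)"
    and "\<forall>\<epsilon>>0. istar \<epsilon> \<in> {1..N} \<and> (\<forall>i\<in>{1..N}. psi \<epsilon> (istar \<epsilon>) \<le> psi \<epsilon> i)"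
    and "(\<lambda>\<epsilon>. Gamma N k (beta \<epsilon>) (psi \<epsilon>) (istar \<epsilon>)) \<in> O[at_right 0](\<lambda>\<epsilon>. 1 / \<epsilon>)"
  shows "\<forall>i\<in>{1..N}. (\<lambda>\<epsilon>. Cplx (c \<epsilon>) N k (beta \<epsilon>) (psi \<epsilon>) i) \<in> O[at_right 0](\<lambda>\<epsilon>. 1 / \<epsilon>)"
proof
  fix i assume i: "i \<in> {1..N}"
  have "\<forall>\<^sub>F \<epsilon> in at_right 0.
      norm (Gamma N k (beta \<epsilon>) (psi \<epsilon>) i) \<le> norm (Gamma N k (beta \<epsilon>) (psi \<epsilon>) (istar \<epsilon>))"
    using eventually_at_right_less[of 0]
  proof eventually_elim
    case (elim \<epsilon>)
    with assms(2,3,5) i show ?case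
      by (simp add: Gamma_nonneg Gamma_antimono)
  qed
  then have "(\<lambda>\<epsilon>. Gamma N k (beta \<epsilon>) (psi \<epsilon>) i)
      \<in> O[at_right 0](\<lambda>\<epsilon>. Gamma N k (beta \<epsilon>) (psi \<epsilon>) (istar \<epsilon>))"
    by (rule landau_o.big_mono)
  then have "(\<lambda>\<epsilon>. Gamma N k (beta \<epsilon>) (psi \<epsilon>) i) \<in> O[at_right 0](\<lambda>\<epsilon>. 1 / \<epsilon>)"
    using assms(6) by (rule landau_o.big_trans)
  with assms(4) show "(\<lambda>\<epsilon>. Cplx (c \<epsilon>) N k (beta \<epsilon>) (psi \<epsilon>) i) \<in> O[at_right 0](\<lambda>\<epsilon>. 1 / \<epsilon>)"
    unfolding Cplx_def by (rule sum_in_bigo)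
qed

end
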